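(* Let $S_\omega$ and $S_{\omega'}$ be standard graded skew polynomial algebras in $n$ variables at cube roots of unity. Then the following are equivalent: (i) the point simplicial complexes $\Delta_\omega$ and $\Delta_{\omega'}$ are isomorphic; (ii) there exists a permutation $\sigma\in\mathfrak{S}_n$ such that, for every $v\in[n]$, $\sigma$ is an isomorphism from the underlying graph of $I_v(M_\omega)$ to the underlying graph of $I_{\sigma(v)}(M_{\omega'})$.
   Context: Let $k$ be an algebraically closed field of characteristic $0$; fix a primitive cube root of unity $\zeta_3$. For $\omega=(\omega_{ij})$ with $\omega_{ii}=1$, $\omega_{ij}\omega_{ji}=1$, all cube roots of unity, $S_\omega=k\langle x_1,\dots,x_n\rangle/(x_ix_j-\omega_{ij}x_jx_i)$ with $\deg x_i=1$; its E-matrix is $M_\omega=(m_{ij})$ over $\mathbb{Z}/3\mathbb{Z}$ with $\omega_{ij}=\zeta_3^{m_{ij}}$ (viewed as a digraph on $[n]$ with an edge $i\to j$ iff $m_{ij}=1$). The point simplicial complex $\Delta_\omega$ has vertex set $[n]$ and faces the $F\subset[n]$ with $\omega_{ij}\omega_{jh}\omega_{hi}=1$ for all distinct $i,j,h\in F$; isomorphism of simplicial complexes means a bijection of vertex sets inducing a bijection of facets. For $v\in[n]$ let $X_v$ be the matrix with $(X_v)_{iv}=1$, $(X_v)_{vi}=-1$ for $i\ne v$ and other entries $0$. The isolation $I_v(M)$ of a skew-symmetric $M$ over $\mathbb{Z}/3\mathbb{Z}$ at $v$ is the unique matrix of the form $M+\sum_{u=1}^n a_uX_u$ ($a_u\in\mathbb{Z}/3\mathbb{Z}$)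 whose $v$-th row and column are zero (i.e., $v$ is an isolated vertex). The underlying graph of a skew-symmetric $N=(n_{ij})$ is the simple undirected graph on $[n]$ with $i,j$ adjacent iff $n_{ij}\ne0$. *)

theory Defs
  imports "HOL-Computational_Algebra.Polynomial"
begin

text \<open>Index set [n] = {1..n}.  Matrices are functions nat => nat => _, only
  entries indexed by [n] matter (entries outside are set to 0 where we construct them).\<close>

definition alg_closed_field :: "'k::field itself \<Rightarrow> bool" where
  "alg_closed_field _ \<longleftrightarrow> (\<forall>p :: 'k poly. degree p > 0 \<longrightarrow> (\<exists>x. poly p x = 0))"

definition primitive_cube_root :: "'k::field \<Rightarrow> bool" where
  "primitive_cube_root z \<longleftrightarrow> z ^ 3 = 1 \<and> z \<noteq> 1"

definition cube_root_param :: "nat \<Rightarrow> (nat \<Rightarrow> nat \<Rightarrow> 'k::field) \<Rightarrow> bool" where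
  "cube_root_param n \<omega> \<longleftrightarrow>
     (\<forall>i\<in>{1..n}. \<omega> i i = 1) \<and>
     (\<forall>i\<in>{1..n}. \<forall>j\<in>{1..n}. \<omega> i j * \<omega> j i = 1 \<and> (\<omega> i j) ^ 3 = 1)"

text \<open>E-matrix over Z/3Z, entries represented by the residues {0,1,2} :: int.\<close>
definition E_matrix :: "nat \<Rightarrow> 'k::field \<Rightarrow> (nat \<Rightarrow> nat \<Rightarrow> 'k) \<Rightarrow> nat \<Rightarrow> nat \<Rightarrow> int" where
  "E_matrix n \<zeta> \<omega> i j =
     (if i \<in> {1..n} \<and> j \<in> {1..n}
      then (THE m::int. m \<in> {0,1,2} \<and> \<omega> i j = \<zeta> ^ nat m) else 0)"

definition point_faces :: "nat \<Rightarrow> (nat \<Rightarrow> nat \<Rightarrow> 'k::field) \<Rightarrow> nat set set" where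
  "point_faces n \<omega> = {F. F \<subseteq> {1..n} \<and>
     (\<forall>i\<in>F. \<forall>j\<in>F. \<forall>h\<in>F. i \<noteq> j \<and> j \<noteq> h \<and> i \<noteq> h \<longrightarrow> \<omega> i j * \<omega> j h * \<omega> h i = 1)}"

definition facets :: "nat set set \<Rightarrow> nat set set" where
  "facets \<Delta> = {F \<in> \<Delta>. \<forall>G\<in>\<Delta>. F \<subseteq> G \<longrightarrow> G = F}"

definition simplicial_iso :: "nat \<Rightarrow> nat set set \<Rightarrow> nat set set \<Rightarrow> bool" where
  "simplicial_iso n \<Delta> \<Delta>' \<longleftrightarrow>
     (\<exists>\<sigma>. bij_betw \<sigma> {1..n} {1..n} \<and> bij_betw (\<lambda>F. \<sigma> ` F) (facets \<Delta>) (facets \<Delta>'))"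

definition X_mat :: "nat \<Rightarrow> nat \<Rightarrow> nat \<Rightarrow> nat \<Rightarrow> int" where
  "X_mat n v i j =
     (if i \<in> {1..n} \<and> j \<in> {1..n} then
        (if i \<noteq> v \<and> j = v then 1 else if i = v \<and> j \<noteq> v then -1 else 0)
      else 0)"

definition is_isolation :: "nat \<Rightarrow> (nat \<Rightarrow> nat \<Rightarrow> int) \<Rightarrow> nat \<Rightarrow> (nat \<Rightarrow> nat \<Rightarrow> int) \<Rightarrow> bool" where
  "is_isolation n M v N \<longleftrightarrow>
     (\<exists>a :: nat \<Rightarrow> int. \<forall>i j. N i j =
        (if i \<in> {1..n} \<and> j \<in> {1..n}
         then (M i j + (\<Sum>u\<in>{1..n}. a u * X_mat n u i j)) mod 3 else 0)) \<and>
     (\<forall>i\<in>{1..n}. N v i = 0 \<and> N i v = 0)"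

definition isolation :: "nat \<Rightarrow> (nat \<Rightarrow> nat \<Rightarrow> int) \<Rightarrow> nat \<Rightarrow> nat \<Rightarrow> nat \<Rightarrow> int" where
  "isolation n M v = (THE N. is_isolation n M v N)"

definition underlying_adj :: "nat \<Rightarrow> (nat \<Rightarrow> nat \<Rightarrow> int) \<Rightarrow> nat \<Rightarrow> nat \<Rightarrow> bool" where
  "underlying_adj n N i j \<longleftrightarrow> i \<in> {1..n} \<and> j \<in> {1..n} \<and> i \<noteq> j \<and> N i j mod 3 \<noteq> 0"

definition graph_iso_by :: "nat \<Rightarrow> (nat \<Rightarrow> nat) \<Rightarrow> (nat \<Rightarrow> nat \<Rightarrow> bool) \<Rightarrow> (nat \<Rightarrow> nat \<Rightarrow> bool) \<Rightarrow> bool" where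
  "graph_iso_by n \<sigma> G H \<longleftrightarrow> bij_betw \<sigma> {1..n} {1..n} \<and>
     (\<forall>i\<in>{1..n}. \<forall>j\<in>{1..n}. G i j \<longleftrightarrow> H (\<sigma> i) (\<sigma> j))"

end

theory Submission
  imports Defs
begin

text \<open>
  Both conditions say that \<sigma> preserves the triangles {i, j, h} whose cyclic product
  \<omega> i j * \<omega> j h * \<omega> h i is 1. A set of vertices is a face of the point complex iff all
  its triangles are, and a finite downward closed family is determined by its maximal members;
  so a vertex bijection induces a bijection of facets iff it maps faces exactly onto faces, iff
  it preserves these triangles. On the other side, writing \<omega> i j = \<zeta>^(m i j), the isolation
  at v has entries m i j + m v i - m v j, which by skew-symmetry is congruent to
  m i j + m j v + m v i modulo 3; so i and j are adjacent in its underlying graph iff the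
  triangle {i, j, v} has product different from 1.
\<close>

lemma finite_facet_above:
  assumes "finite D" "F \<in> D"
  shows "\<exists>G\<in>facets D. F \<subseteq> G"
proof -
  obtain G where "G \<in> D" "F \<subseteq> G" "\<forall>H\<in>D. G \<subseteq> H \<longrightarrow> G = H"
    using finite_has_maximal2[OF assms] by blast
  then show ?thesis unfolding facets_def by auto
qed

lemma facets_subset: "facets D \<subseteq> D"
  unfolding facets_def by blast

lemma bij_betw_facets:
  assumes f: "bij_betw f D D'"
    and mono: "\<And>F G. F \<in> D \<Longrightarrow> G \<in> D \<Longrightarrow> f F \<subseteq> f G \<longleftrightarrow> F \<subseteq> G"
  shows "bij_betw f (facets D) (facets D')"
proof -
  have image: "f ` D = D'" using f by (simp add: bij_betw_def)
  have "f ` facets D = facets D'"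
  proof
    show "f ` facets D \<subseteq> facets D'"
    proof
      fix G' assume "G' \<in> f ` facets D"
      then obtain G where G: "G \<in> facets D" "G' = f G" by blast
      then have GD: "G \<in> D" using facets_subset by blast
      have "H' = G'" if H': "H' \<in> D'" "G' \<subseteq> H'" for H'
      proof -
        obtain H where H: "H \<in> D" "H' = f H" using image H'(1) by blast
        then have "G \<subseteq> H" using mono[OF GD H(1)] G(2) H'(2) by simp
        then have "H = G" using G(1) H(1) unfolding facets_def by blast
        then show ?thesis using G(2) H(2) by simp
      qed
      moreover have "G' \<in> D'" using GD G(2) image by blast
      ultimately show "G' \<in> facets D'" unfolding facets_def by blast
    qed
    show "facets D' \<subseteq> f ` facets D"
    proof
      fix G' assume G': "G' \<in> facets D'"
      then obtain G where G: "G \<in> D" "G' = f G" using image facets_subset by blast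
      have "H = G" if H: "H \<in> D" "G \<subseteq> H" for H
      proof -
        have "f H \<in> D'" "G' \<subseteq> f H" using image H mono[OF G(1) H(1)] G(2) by auto
        then have "f H = G'" using G' unfolding facets_def by blast
        then have "H \<subseteq> G" using mono[OF H(1) G(1)] G(2) by simp
        then show ?thesis using H(2) by (rule antisym)
      qed
      then have "G \<in> facets D" using G(1) unfolding facets_def by blast
      then show "G' \<in> f ` facets D" using G(2) by blast
    qed
  qed
  moreover have "inj_on f (facets D)"
    using bij_betw_imp_inj_on[OF f] facets_subset by (rule inj_on_subset)
  ultimately show ?thesis by (simp add: bij_betw_def)
qed

lemma inj_on_image_subset_iff:
  assumes "inj_on f C" "A \<subseteq> C" "B \<subseteq> C"
  shows "f ` A \<subseteq> f ` B \<longleftrightarrow> A \<subseteq> B"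
proof
  show "A \<subseteq> B" if "f ` A \<subseteq> f ` B"
  proof
    fix x assume "x \<in> A"
    then have "f x \<in> f ` B" using that by blast
    then show "x \<in> B" using inj_on_image_mem_iff[OF assms(1)] assms(2,3) \<open>x \<in> A\<close> by blast
  qed
qed (rule image_mono)

lemma bij_betw_image_facets:
  assumes s: "bij_betw s A B" and D: "D \<subseteq> Pow A" and D': "D' \<subseteq> Pow B"
    and faces: "\<And>F. F \<subseteq> A \<Longrightarrow> s ` F \<in> D' \<longleftrightarrow> F \<in> D"
  shows "bij_betw (image s) (facets D) (facets D')"
proof (rule bij_betw_facets)
  have inj: "inj_on s A" using s by (rule bij_betw_imp_inj_on)
  have "image s ` D = D'"
  proof
    show "image s ` D \<subseteq> D'"
    proof
      fix G' assume "G' \<in> image s ` D"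
      then obtain G where "G \<in> D" "G' = s ` G" by (rule imageE)
      then show "G' \<in> D'" using faces D by auto
    qed
    show "D' \<subseteq> image s ` D"
    proof
      fix G' assume G': "G' \<in> D'"
      have "image s ` Pow A = Pow B" using bij_betw_Pow[OF s] by (rule bij_betw_imp_surj_on)
      then have "G' \<in> image s ` Pow A" using G' D' by auto
      then obtain G where "G \<subseteq> A" "G' = s ` G" by auto
      then show "G' \<in> image s ` D" using faces G' by auto
    qed
  qed
  moreover have "inj_on (image s) D"
    using inj_on_image_Pow[OF inj] D by (rule inj_on_subset)
  ultimately show "bij_betw (image s) D D'" by (simp add: bij_betw_def)
  show "s ` F \<subseteq> s ` G \<longleftrightarrow> F \<subseteq> G" if "F \<in> D" "G \<in> D" for F G
    using that D by (intro inj_on_image_subset_iff[OF inj]) auto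
qed

lemma image_mem_iff_if_bij_betw_image_facets:
  assumes s: "bij_betw s A B" and "finite A"
    and D: "D \<subseteq> Pow A" and D': "D' \<subseteq> Pow B"
    and down: "\<forall>F\<in>D. Pow F \<subseteq> D" and down': "\<forall>F\<in>D'. Pow F \<subseteq> D'"
    and facets: "bij_betw (image s) (facets D) (facets D')"
    and F: "F \<subseteq> A"
  shows "s ` F \<in> D' \<longleftrightarrow> F \<in> D"
proof
  have "finite B" using bij_betw_finite[OF s] \<open>finite A\<close> by simp
  then have fin: "finite D" "finite D'"
    using finite_subset[OF D] finite_subset[OF D'] \<open>finite A\<close> by simp_all
  show "s ` F \<in> D'" if FD: "F \<in> D"
  proof -
    obtain G where G: "G \<in> facets D" "F \<subseteq> G" using finite_facet_above[OF fin(1) FD] by blast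
    then have "s ` G \<in> D'" using bij_betw_apply[OF facets] facets_subset by blast
    moreover have "s ` F \<subseteq> s ` G" using G(2) by (rule image_mono)
    ultimately show ?thesis using down' by blast
  qed
  show "F \<in> D" if sF: "s ` F \<in> D'"
  proof -
    obtain G' where G': "G' \<in> facets D'" "s ` F \<subseteq> G'" using finite_facet_above[OF fin(2) sF] by blast
    then have "G' \<in> image s ` facets D" using bij_betw_imp_surj_on[OF facets] by simp
    then obtain G where G: "G' = s ` G" "G \<in> facets D" by (rule imageE)
    then have "G \<in> D" using facets_subset by blast
    moreover have "F \<subseteq> G"
      using inj_on_image_subset_iff[OF bij_betw_imp_inj_on[OF s] F] G' G \<open>G \<in> D\<close> D by blast
    ultimately show ?thesis using down by blast
  qed
qed

definition triangle_prod :: "(nat \<Rightarrow> nat \<Rightarrow> 'k::field) \<Rightarrow> nat \<Rightarrow> nat \<Rightarrow> nat \<Rightarrow> 'k" where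
  "triangle_prod \<omega> i j h = \<omega> i j * \<omega> j h * \<omega> h i"

definition preserves_unit_triangles ::
    "nat \<Rightarrow> (nat \<Rightarrow> nat) \<Rightarrow> (nat \<Rightarrow> nat \<Rightarrow> 'k::field) \<Rightarrow> (nat \<Rightarrow> nat \<Rightarrow> 'k) \<Rightarrow> bool" where
  "preserves_unit_triangles n \<sigma> \<omega> \<omega>' \<longleftrightarrow>
     (\<forall>i\<in>{1..n}. \<forall>j\<in>{1..n}. \<forall>h\<in>{1..n}.
        triangle_prod \<omega> i j h = 1 \<longleftrightarrow> triangle_prod \<omega>' (\<sigma> i) (\<sigma> j) (\<sigma> h) = 1)"

lemma triangle_prod_rotate: "triangle_prod \<omega> i j h = triangle_prod \<omega> j h i"
  by (simp add: triangle_prod_def mult_ac)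

context
  fixes n :: nat and \<omega> :: "nat \<Rightarrow> nat \<Rightarrow> 'k::field"
  assumes param: "cube_root_param n \<omega>"
begin

lemma triangle_prod_degenerate:
  assumes "i \<in> {1..n}" "j \<in> {1..n}" "h \<in> {1..n}" "i = j \<or> j = h \<or> h = i"
  shows "triangle_prod \<omega> i j h = 1"
  using assms param by (auto simp: triangle_prod_def cube_root_param_def mult.commute)

lemma triangle_prod_swap_eq_1_iff:
  assumes "i \<in> {1..n}" "j \<in> {1..n}" "h \<in> {1..n}"
  shows "triangle_prod \<omega> j i h = 1 \<longleftrightarrow> triangle_prod \<omega> i j h = 1"
proof -
  have "triangle_prod \<omega> j i h * triangle_prod \<omega> i j h = (\<omega> i j * \<omega> j i) * (\<omega> j h * \<omega> h j) * (\<omega> h i * \<omega> i h)"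
    by (simp add: triangle_prod_def mult_ac)
  also have "\<dots> = 1" using param assms by (simp add: cube_root_param_def)
  finally show ?thesis by (metis mult_1_left mult_1_right)
qed

lemma point_faces_iff:
  "F \<in> point_faces n \<omega> \<longleftrightarrow> F \<subseteq> {1..n} \<and> (\<forall>i\<in>F. \<forall>j\<in>F. \<forall>h\<in>F. triangle_prod \<omega> i j h = 1)"
proof -
  have "triangle_prod \<omega> i j h = 1"
    if "F \<subseteq> {1..n}" "i \<in> F" "j \<in> F" "h \<in> F" "\<not> (i \<noteq> j \<and> j \<noteq> h \<and> i \<noteq> h)" for i j h
    using that by (intro triangle_prod_degenerate) auto
  then show ?thesis unfolding point_faces_def triangle_prod_def[symmetric] by blast
qed

lemma triangle_in_point_faces_iff:
  assumes ijh: "i \<in> {1..n}" "j \<in> {1..n}" "h \<in> {1..n}"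
  shows "{i, j, h} \<in> point_faces n \<omega> \<longleftrightarrow> triangle_prod \<omega> i j h = 1"
proof
  assume ijh_1: "triangle_prod \<omega> i j h = 1"
  have rotations: "triangle_prod \<omega> j h i = 1" "triangle_prod \<omega> h i j = 1"
    using ijh_1 triangle_prod_rotate[of \<omega> i j h] triangle_prod_rotate[of \<omega> j h i] by simp_all
  have "triangle_prod \<omega> j i h = 1" "triangle_prod \<omega> i h j = 1" "triangle_prod \<omega> h j i = 1"
    using ijh_1 rotations triangle_prod_swap_eq_1_iff[OF ijh] triangle_prod_swap_eq_1_iff[of h i j]
      triangle_prod_swap_eq_1_iff[of j h i] ijh by simp_all
  note permutations = ijh_1 rotations this
  have "triangle_prod \<omega> x y z = 1" if xyz: "x \<in> {i, j, h}" "y \<in> {i, j, h}" "z \<in> {i, j, h}" for x y z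
  proof (cases "x = y \<or> y = z \<or> z = x")
    case True
    then show ?thesis using xyz ijh by (intro triangle_prod_degenerate) auto
  next
    case False
    then show ?thesis using xyz permutations by auto
  qed
  then show "{i, j, h} \<in> point_faces n \<omega>"
    using ijh by (simp add: point_faces_iff)
qed (simp add: point_faces_iff)

end

lemma point_faces_preserved_iff:
  fixes \<omega> \<omega>' :: "nat \<Rightarrow> nat \<Rightarrow> 'k::field"
  assumes P: "cube_root_param n \<omega>" and P': "cube_root_param n \<omega>'"
    and \<sigma>: "bij_betw \<sigma> {1..n} {1..n}"
  shows "(\<forall>F\<subseteq>{1..n}. \<sigma> ` F \<in> point_faces n \<omega>' \<longleftrightarrow> F \<in> point_faces n \<omega>) \<longleftrightarrow>
    preserves_unit_triangles n \<sigma> \<omega> \<omega>'"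
proof -
  have \<sigma>_mem: "\<sigma> i \<in> {1..n}" if "i \<in> {1..n}" for i using bij_betw_apply[OF \<sigma> that] .
  show ?thesis
  proof
    assume faces: "\<forall>F\<subseteq>{1..n}. \<sigma> ` F \<in> point_faces n \<omega>' \<longleftrightarrow> F \<in> point_faces n \<omega>"
    show "preserves_unit_triangles n \<sigma> \<omega> \<omega>'"
      unfolding preserves_unit_triangles_def
    proof (intro ballI)
      fix i j h assume ijh: "i \<in> {1..n}" "j \<in> {1..n}" "h \<in> {1..n}"
      have "triangle_prod \<omega> i j h = 1 \<longleftrightarrow> {i, j, h} \<in> point_faces n \<omega>"
        by (rule triangle_in_point_faces_iff[OF P ijh, symmetric])
      also have "\<dots> \<longleftrightarrow> {\<sigma> i, \<sigma> j, \<sigma> h} \<in> point_faces n \<omega>'"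
        using faces[rule_format, of "{i, j, h}"] ijh by simp
      also have "\<dots> \<longleftrightarrow> triangle_prod \<omega>' (\<sigma> i) (\<sigma> j) (\<sigma> h) = 1"
        using triangle_in_point_faces_iff[OF P'] ijh \<sigma>_mem by simp
      finally show "triangle_prod \<omega> i j h = 1 \<longleftrightarrow> triangle_prod \<omega>' (\<sigma> i) (\<sigma> j) (\<sigma> h) = 1" .
    qed
  next
    assume preserves: "preserves_unit_triangles n \<sigma> \<omega> \<omega>'"
    show "\<forall>F\<subseteq>{1..n}. \<sigma> ` F \<in> point_faces n \<omega>' \<longleftrightarrow> F \<in> point_faces n \<omega>"
    proof (intro allI impI)
      fix F assume F: "F \<subseteq> {1..n}"
      then have "\<sigma> ` F \<subseteq> {1..n}" using \<sigma>_mem by blast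
      moreover have "triangle_prod \<omega>' (\<sigma> i) (\<sigma> j) (\<sigma> h) = 1 \<longleftrightarrow> triangle_prod \<omega> i j h = 1"
        if "i \<in> F" "j \<in> F" "h \<in> F" for i j h
        using preserves F that unfolding preserves_unit_triangles_def by blast
      ultimately show "\<sigma> ` F \<in> point_faces n \<omega>' \<longleftrightarrow> F \<in> point_faces n \<omega>"
        using F by (simp add: point_faces_iff[OF P] point_faces_iff[OF P'] cong: ball_cong)
    qed
  qed
qed

lemma simplicial_iso_point_faces_iff:
  fixes \<omega> \<omega>' :: "nat \<Rightarrow> nat \<Rightarrow> 'k::field"
  assumes P: "cube_root_param n \<omega>" and P': "cube_root_param n \<omega>'"
  shows "simplicial_iso n (point_faces n \<omega>) (point_faces n \<omega>') \<longleftrightarrow>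
    (\<exists>\<sigma>. bij_betw \<sigma> {1..n} {1..n} \<and> preserves_unit_triangles n \<sigma> \<omega> \<omega>')"
proof -
  have sub: "point_faces n w \<subseteq> Pow {1..n}" for w :: "nat \<Rightarrow> nat \<Rightarrow> 'k"
    by (auto simp: point_faces_def)
  have down: "\<forall>F\<in>point_faces n w. Pow F \<subseteq> point_faces n w" for w :: "nat \<Rightarrow> nat \<Rightarrow> 'k"
    unfolding point_faces_def by blast
  have "bij_betw (image \<sigma>) (facets (point_faces n \<omega>)) (facets (point_faces n \<omega>'))
      \<longleftrightarrow> preserves_unit_triangles n \<sigma> \<omega> \<omega>'" if \<sigma>: "bij_betw \<sigma> {1..n} {1..n}" for \<sigma>
  proof
    assume "bij_betw (image \<sigma>) (facets (point_faces n \<omega>)) (facets (point_faces n \<omega>'))"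
    then have "\<forall>F\<subseteq>{1..n}. \<sigma> ` F \<in> point_faces n \<omega>' \<longleftrightarrow> F \<in> point_faces n \<omega>"
      using image_mem_iff_if_bij_betw_image_facets[OF \<sigma> finite_atLeastAtMost sub sub down down] by blast
    then show "preserves_unit_triangles n \<sigma> \<omega> \<omega>'"
      using point_faces_preserved_iff[OF P P' \<sigma>] by blast
  next
    assume "preserves_unit_triangles n \<sigma> \<omega> \<omega>'"
    then have "\<forall>F\<subseteq>{1..n}. \<sigma> ` F \<in> point_faces n \<omega>' \<longleftrightarrow> F \<in> point_faces n \<omega>"
      using point_faces_preserved_iff[OF P P' \<sigma>] by blast
    then show "bij_betw (image \<sigma>) (facets (point_faces n \<omega>)) (facets (point_faces n \<omega>'))"
      using bij_betw_image_facets[OF \<sigma> sub sub] by blast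
  qed
  then show ?thesis unfolding simplicial_iso_def by blast
qed

definition skew_mod3 :: "nat \<Rightarrow> (nat \<Rightarrow> nat \<Rightarrow> int) \<Rightarrow> bool" where
  "skew_mod3 n M \<longleftrightarrow> (\<forall>i\<in>{1..n}. \<forall>j\<in>{1..n}. (M i j + M j i) mod 3 = 0)"

lemma sum_X_mat:
  assumes "i \<in> {1..n}" "j \<in> {1..n}"
  shows "(\<Sum>u\<in>{1..n}. a u * X_mat n u i j) = a j - a i"
proof -
  have "a u * X_mat n u i j = (if u = j then a u else 0) - (if u = i then a u else 0)" for u
    using assms by (auto simp: X_mat_def)
  then have "(\<Sum>u\<in>{1..n}. a u * X_mat n u i j)
      = (\<Sum>u\<in>{1..n}. if u = j then a u else 0) - (\<Sum>u\<in>{1..n}. if u = i then a u else 0)"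
    by (simp add: sum_subtractf)
  also have "\<dots> = a j - a i" using assms by (simp add: sum.delta')
  finally show ?thesis .
qed

lemma is_isolation_eq:
  assumes N: "is_isolation n M v N" and v: "v \<in> {1..n}"
  shows "N i j = (if i \<in> {1..n} \<and> j \<in> {1..n} then (M i j + M v i - M v j) mod 3 else 0)"
proof -
  obtain a where a: "\<And>i j. N i j = (if i \<in> {1..n} \<and> j \<in> {1..n}
      then (M i j + (\<Sum>u\<in>{1..n}. a u * X_mat n u i j)) mod 3 else 0)"
    and zero: "\<forall>i\<in>{1..n}. N v i = 0 \<and> N i v = 0"
    using N unfolding is_isolation_def by blast
  \<comment> \<open>The vanishing of row v determines the coefficients: a j = a v - M v j (mod 3).\<close>
  have a_row: "(M v j + a j - a v) mod 3 = 0" if "j \<in> {1..n}" for j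
    using a[of v j] zero that v sum_X_mat[OF v that, of a] by (simp add: add_diff_eq)
  show ?thesis
  proof (cases "i \<in> {1..n} \<and> j \<in> {1..n}")
    case True
    then have "(M v i + a i - a v) mod 3 = 0" "(M v j + a j - a v) mod 3 = 0"
      using a_row by auto
    then have "(M i j + (a j - a i)) mod 3 = (M i j + M v i - M v j) mod 3" by presburger
    then show ?thesis using True sum_X_mat[of i n j a] by (simp add: a)
  qed (auto simp: a)
qed

lemma is_isolation_exists:
  assumes M: "skew_mod3 n M" and v: "v \<in> {1..n}"
  shows "is_isolation n M v
    (\<lambda>i j. if i \<in> {1..n} \<and> j \<in> {1..n} then (M i j + M v i - M v j) mod 3 else 0)"
  unfolding is_isolation_def
proof (intro conjI exI[of _ "\<lambda>u. - M v u"] allI ballI)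
  have "(M v v + M v v) mod 3 = 0" using M v unfolding skew_mod3_def by blast
  then have Mvv: "M v v mod 3 = 0" by presburger
  fix i j
  show "(if i \<in> {1..n} \<and> j \<in> {1..n} then (M i j + M v i - M v j) mod 3 else 0) =
      (if i \<in> {1..n} \<and> j \<in> {1..n}
       then (M i j + (\<Sum>u\<in>{1..n}. - M v u * X_mat n u i j)) mod 3 else 0)"
  proof (cases "i \<in> {1..n} \<and> j \<in> {1..n}")
    case True
    then have "(\<Sum>u\<in>{1..n}. - M v u * X_mat n u i j) = M v i - M v j"
      using sum_X_mat[of i n j "\<lambda>u. - M v u"] by simp
    then show ?thesis using True by (simp add: add_diff_eq)
  qed auto
  assume i: "i \<in> {1..n}"
  show "(if v \<in> {1..n} \<and> i \<in> {1..n} then (M v i + M v v - M v i) mod 3 else 0) = 0"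
    using Mvv by simp
  have "(M i v + M v i) mod 3 = 0" using M i v unfolding skew_mod3_def by blast
  then show "(if i \<in> {1..n} \<and> v \<in> {1..n} then (M i v + M v i - M v v) mod 3 else 0) = 0"
    using Mvv by presburger
qed

lemma isolation_eq:
  assumes M: "skew_mod3 n M" and v: "v \<in> {1..n}" and ij: "i \<in> {1..n}" "j \<in> {1..n}"
  shows "isolation n M v i j = (M i j + M v i - M v j) mod 3"
proof -
  define N where
    "N = (\<lambda>i j. if i \<in> {1..n} \<and> j \<in> {1..n} then (M i j + M v i - M v j) mod 3 else 0)"
  have "isolation n M v = N"
    unfolding isolation_def
  proof (rule the_equality)
    show "is_isolation n M v N" unfolding N_def by (rule is_isolation_exists[OF M v])
    show "N' = N" if "is_isolation n M v N'" for N'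
      unfolding N_def by (simp add: fun_eq_iff is_isolation_eq[OF that v])
  qed
  then show ?thesis using ij by (simp add: N_def)
qed

lemma underlying_adj_isolation_iff:
  assumes M: "skew_mod3 n M" and vij: "v \<in> {1..n}" "i \<in> {1..n}" "j \<in> {1..n}"
  shows "underlying_adj n (isolation n M v) i j \<longleftrightarrow> (M i j + M j v + M v i) mod 3 \<noteq> 0"
proof -
  have skew: "(M j v + M v j) mod 3 = 0" "(M i i + M i i) mod 3 = 0" "(M i v + M v i) mod 3 = 0"
    using M vij unfolding skew_mod3_def by blast+
  then have "(M i j + M v i - M v j) mod 3 \<noteq> 0 \<longleftrightarrow> (M i j + M j v + M v i) mod 3 \<noteq> 0"
    and "(M i i + M i v + M v i) mod 3 = 0"
    by presburger+
  then show ?thesis using vij by (auto simp: underlying_adj_def isolation_eq[OF M])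
qed

lemma primitive_cube_root_powers:
  assumes "primitive_cube_root z"
  shows "z ^ 3 = 1" "z \<noteq> 0" "z \<noteq> 1" "z ^ 2 \<noteq> 1" "z ^ 2 \<noteq> z"
proof -
  show z3: "z ^ 3 = 1" and z1: "z \<noteq> 1" using assms unfolding primitive_cube_root_def by auto
  then show "z \<noteq> 0" by auto
  have z3_eq: "z ^ 3 = z ^ 2 * z" by (simp add: power3_eq_cube power2_eq_square)
  show "z ^ 2 \<noteq> 1" using z3 z1 z3_eq by auto
  show "z ^ 2 \<noteq> z" using z3 z1 z3_eq by (auto simp: power2_eq_square)
qed

lemma cube_root_of_unity_cases:
  assumes "primitive_cube_root z" "x ^ 3 = 1"
  shows "x = 1 \<or> x = z \<or> x = z ^ 2"
proof -
  note z = primitive_cube_root_powers[OF assms(1)]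
  have "(z - 1) * (z ^ 2 + z + 1) = z ^ 3 - 1"
    by (simp add: algebra_simps power2_eq_square power3_eq_cube)
  then have sum: "z ^ 2 + z + 1 = 0" using z by simp
  have "(x - 1) * (x - z) * (x - z ^ 2)
      = x ^ 3 - 1 - (z ^ 2 + z + 1) * x ^ 2 + z * (z ^ 2 + z + 1) * x - (z ^ 3 - 1)"
    by (simp add: algebra_simps power2_eq_square power3_eq_cube)
  then have "(x - 1) * (x - z) * (x - z ^ 2) = 0" using assms(2) sum z by simp
  then show ?thesis by auto
qed

lemma primitive_cube_root_powi_eq_1_iff:
  assumes "primitive_cube_root z"
  shows "z powi k = 1 \<longleftrightarrow> k mod 3 = 0"
proof -
  note z = primitive_cube_root_powers[OF assms]
  have "z powi k = z powi (3 * (k div 3) + k mod 3)" by simp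
  also have "\<dots> = (z powi 3) powi (k div 3) * z powi (k mod 3)"
    by (simp only: power_int_add[OF disjI1[OF z(2)]] power_int_mult)
  also have "\<dots> = z powi (k mod 3)" using z by simp
  finally have "z powi k = z powi (k mod 3)" .
  moreover have "k mod 3 = 0 \<or> k mod 3 = 1 \<or> k mod 3 = 2" by presburger
  ultimately show ?thesis using z by auto
qed

lemma E_matrix_powi:
  assumes \<zeta>: "primitive_cube_root \<zeta>" and P: "cube_root_param n \<omega>"
    and ij: "i \<in> {1..n}" "j \<in> {1..n}"
  shows "\<omega> i j = \<zeta> powi E_matrix n \<zeta> \<omega> i j"
proof -
  note z = primitive_cube_root_powers[OF \<zeta>]
  have "\<omega> i j ^ 3 = 1" using P ij unfolding cube_root_param_def by blast
  then have "\<omega> i j = \<zeta> ^ nat 0 \<or> \<omega> i j = \<zeta> ^ nat 1 \<or> \<omega> i j = \<zeta> ^ nat 2"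
    using cube_root_of_unity_cases[OF \<zeta>] by simp
  then have "\<exists>m::int. m \<in> {0, 1, 2} \<and> \<omega> i j = \<zeta> ^ nat m" by blast
  moreover have "m = m'" if "m \<in> {0, 1, 2} \<and> \<omega> i j = \<zeta> ^ nat m"
    and "m' \<in> {0, 1, 2} \<and> \<omega> i j = \<zeta> ^ nat m'" for m m' :: int
    using that z z(3-5)[symmetric] by auto
  ultimately have "\<exists>!m::int. m \<in> {0, 1, 2} \<and> \<omega> i j = \<zeta> ^ nat m" by blast
  from theI'[OF this] have "E_matrix n \<zeta> \<omega> i j \<ge> 0 \<and> \<omega> i j = \<zeta> ^ nat (E_matrix n \<zeta> \<omega> i j)"
    using ij by (auto simp: E_matrix_def)
  then show ?thesis by (simp add: power_int_def)
qed

lemma skew_mod3_E_matrix: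
  assumes \<zeta>: "primitive_cube_root \<zeta>" and P: "cube_root_param n \<omega>"
  shows "skew_mod3 n (E_matrix n \<zeta> \<omega>)"
  unfolding skew_mod3_def
proof (intro ballI)
  fix i j assume ij: "i \<in> {1..n}" "j \<in> {1..n}"
  have "\<zeta> powi (E_matrix n \<zeta> \<omega> i j + E_matrix n \<zeta> \<omega> j i) = \<omega> i j * \<omega> j i"
    using E_matrix_powi[OF \<zeta> P] ij primitive_cube_root_powers(2)[OF \<zeta>] by (simp add: power_int_add)
  also have "\<dots> = 1" using P ij by (simp add: cube_root_param_def)
  finally show "(E_matrix n \<zeta> \<omega> i j + E_matrix n \<zeta> \<omega> j i) mod 3 = 0"
    using primitive_cube_root_powi_eq_1_iff[OF \<zeta>] by simp
qed

lemma triangle_prod_eq_1_iff_E_matrix: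
  assumes \<zeta>: "primitive_cube_root \<zeta>" and P: "cube_root_param n \<omega>"
    and ijh: "i \<in> {1..n}" "j \<in> {1..n}" "h \<in> {1..n}"
  shows "triangle_prod \<omega> i j h = 1 \<longleftrightarrow>
    (E_matrix n \<zeta> \<omega> i j + E_matrix n \<zeta> \<omega> j h + E_matrix n \<zeta> \<omega> h i) mod 3 = 0"
proof -
  have "triangle_prod \<omega> i j h = \<zeta> powi (E_matrix n \<zeta> \<omega> i j + E_matrix n \<zeta> \<omega> j h + E_matrix n \<zeta> \<omega> h i)"
    using E_matrix_powi[OF \<zeta> P] ijh primitive_cube_root_powers(2)[OF \<zeta>]
    by (simp add: triangle_prod_def power_int_add)
  then show ?thesis using primitive_cube_root_powi_eq_1_iff[OF \<zeta>] by simp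
qed

lemma underlying_adj_isolation_E_matrix:
  assumes \<zeta>: "primitive_cube_root \<zeta>" and P: "cube_root_param n \<omega>"
    and vij: "v \<in> {1..n}" "i \<in> {1..n}" "j \<in> {1..n}"
  shows "underlying_adj n (isolation n (E_matrix n \<zeta> \<omega>) v) i j \<longleftrightarrow> triangle_prod \<omega> i j v \<noteq> 1"
  using underlying_adj_isolation_iff[OF skew_mod3_E_matrix[OF \<zeta> P] vij]
    triangle_prod_eq_1_iff_E_matrix[OF \<zeta> P vij(2,3,1)] by simp

lemma graph_iso_by_isolations_iff:
  assumes \<zeta>: "primitive_cube_root \<zeta>" and P: "cube_root_param n \<omega>" and P': "cube_root_param n \<omega>'"
    and \<sigma>: "bij_betw \<sigma> {1..n} {1..n}"
  shows "(\<forall>v\<in>{1..n}. graph_iso_by n \<sigma>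
      (underlying_adj n (isolation n (E_matrix n \<zeta> \<omega>) v))
      (underlying_adj n (isolation n (E_matrix n \<zeta> \<omega>') (\<sigma> v))))
    \<longleftrightarrow> preserves_unit_triangles n \<sigma> \<omega> \<omega>'"
proof -
  have \<sigma>_mem: "\<sigma> i \<in> {1..n}" if "i \<in> {1..n}" for i using bij_betw_apply[OF \<sigma> that] .
  have "graph_iso_by n \<sigma> (underlying_adj n (isolation n (E_matrix n \<zeta> \<omega>) v))
      (underlying_adj n (isolation n (E_matrix n \<zeta> \<omega>') (\<sigma> v)))
    \<longleftrightarrow> (\<forall>i\<in>{1..n}. \<forall>j\<in>{1..n}.
          triangle_prod \<omega> i j v = 1 \<longleftrightarrow> triangle_prod \<omega>' (\<sigma> i) (\<sigma> j) (\<sigma> v) = 1)"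
    if v: "v \<in> {1..n}" for v
    using \<sigma> v \<sigma>_mem
    by (auto simp: graph_iso_by_def underlying_adj_isolation_E_matrix[OF \<zeta> P]
        underlying_adj_isolation_E_matrix[OF \<zeta> P'])
  then show ?thesis unfolding preserves_unit_triangles_def by blast
qed

theorem proposition5p4:
  fixes \<zeta> :: "'k::field_char_0"
    and n :: nat
    and \<omega> \<omega>' :: "nat \<Rightarrow> nat \<Rightarrow> 'k"
  assumes "alg_closed_field TYPE('k)"
    and "primitive_cube_root \<zeta>"
    and "cube_root_param n \<omega>"
    and "cube_root_param n \<omega>'"
  shows "simplicial_iso n (point_faces n \<omega>) (point_faces n \<omega>') \<longleftrightarrow>
    (\<exists>\<sigma>. bij_betw \<sigma> {1..n} {1..n} \<and>
       (\<forall>v\<in>{1..n}. graph_iso_by n \<sigma>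
          (underlying_adj n (isolation n (E_matrix n \<zeta> \<omega>) v))
          (underlying_adj n (isolation n (E_matrix n \<zeta> \<omega>') (\<sigma> v)))))"
  unfolding simplicial_iso_point_faces_iff[OF assms(3,4)]
  using graph_iso_by_isolations_iff[OF assms(2-4)] by blast

end
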